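(* Let $k\ge1$ and let $B\in\mathfrak{gl}_n(\mathbb C)$ satisfy $B[B,B^*]=-B$, $B^k\ne0$, $B^{k+1}=0$. Let $\mathbb C^n=V_0\oplus\cdots\oplus V_k$ be an orthogonal decomposition with $V_0=\ker B$, $B(V_i)\subset V_{i-1}$ for $1\le i\le k$, and such that $E_i:=\mathrm{Pr}_{V_{i-1}}B|_{V_i}$ satisfy $E_i^*E_i-E_{i+1}E_{i+1}^*=\mathrm{Id}_{V_i}$ for $1\le i<k$ and $E_k^*E_k=\mathrm{Id}_{V_k}$ (such a decomposition exists). Then there is an orthonormal basis of $\mathbb C^n$ subordinate to this splitting in which $B$ is represented by the block matrix whose only nonzero blocks are $\Sigma_i\in\mathbb C^{\dim V_{i-1}\times\dim V_i}$ in block position $(i-1,i)$, $1\le i\le k$, where each $\Sigma_i$ has nonzero entries only on its main diagonal, these entries $\sigma_{ij}:=(\Sigma_i)_{jj}$ ($1\le j\le\dim V_i$) being positive reals given recursively by $$\sigma_{ij}=\begin{cases}\sqrt{1+\sigma_{(i+1)j}^2},& i<k,\ 1\le j\le\dim V_{i+1},\\ 1,& i<k,\ \dim V_{i+1}<j\le\dim V_i,\\ 1,& i=k,\ 1\le j\le\dim V_k.\end{cases}$$ In particular this matrix representation is uniquely determined by the numbers $\dim V_i$, and hence only by the Jordan decomposition of $B$.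
   Context: $\mathbb C^n$ carries the standard Hermitian inner product; $^*$ denotes adjoint, $\mathrm{Pr}_V$ orthogonal projection onto $V$, $[X,Y]=XY-YX$. A basis is subordinate to the splitting if it is a union of bases of the $V_i$, listed in order $V_0,V_1,\dots,V_k$. *)

theory Defs
  imports "HOL-Analysis.Analysis"
begin

definition cinner :: "complex^'n \<Rightarrow> complex^'n \<Rightarrow> complex" where
  "cinner x y = (\<Sum>i\<in>UNIV. x$i * cnj (y$i))"

definition adjoint :: "complex^'n^'n \<Rightarrow> complex^'n^'n" where
  "adjoint A = (\<chi> i j. cnj (A$j$i))"

definition mpow :: "complex^'n^'n \<Rightarrow> nat \<Rightarrow> complex^'n^'n" where
  "mpow A m = (((**) A) ^^ m) (mat 1)"

definition cproj :: "(complex^'n) set \<Rightarrow> complex^'n \<Rightarrow> complex^'n" where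
  "cproj V x = (THE y. y \<in> V \<and> (\<forall>z\<in>V. cinner (x - y) z = 0))"

text \<open>E_i = Pr_{V_{i-1}} B restricted to V_i, and its adjoint E_i^* : V_{i-1} \<rightarrow> V_i,
  which is Pr_{V_i} B^* restricted to V_{i-1}.\<close>
definition Eop :: "complex^'n^'n \<Rightarrow> (nat \<Rightarrow> (complex^'n) set) \<Rightarrow> nat \<Rightarrow> complex^'n \<Rightarrow> complex^'n" where
  "Eop B V i x = cproj (V (i - 1)) (B *v x)"

definition Eadj :: "complex^'n^'n \<Rightarrow> (nat \<Rightarrow> (complex^'n) set) \<Rightarrow> nat \<Rightarrow> complex^'n \<Rightarrow> complex^'n" where
  "Eadj B V i y = cproj (V i) (adjoint B *v y)"

function sigma :: "nat \<Rightarrow> (nat \<Rightarrow> nat) \<Rightarrow> nat \<Rightarrow> nat \<Rightarrow> real" where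
  "sigma k d i j =
     (if i < k \<and> j \<le> d (Suc i) then sqrt (1 + (sigma k d (Suc i) j)^2) else 1)"
  by auto
termination by (relation "Wellfounded.measure (\<lambda>(k,d,i,j). k - i)") auto

end

theory Submission
  imports Defs
begin

text \<open>
  Since B maps V_i into V_(i-1), the splitting is orthogonal and V_0 = ker B, the adjoint
  B^* maps V_(i-1) into V_i and kills V_k. Hence E_i and E_i^* are plain restrictions of B and
  B^*, and the hypotheses say that B^*B = 1 + BB^* on every V_i with i \<ge> 1.

  The bases are built downwards, starting from any orthonormal basis of V_k. If u_ij is an
  orthonormal basis of V_i with B^*B u_ij = \<sigma>_ij^2 u_ij, the vectors B u_ij / \<sigma>_ij are
  orthonormal in V_(i-1); extend them by Gram--Schmidt to an orthonormal basis w_j of V_(i-1).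
  Then B^* w_j = \<sigma>_ij u_ij for j \<le> dim V_i and B^* w_j = 0 otherwise, so
  B^*B w_j = w_j + BB^* w_j equals (1 + \<sigma>_ij^2) w_j or w_j: exactly the recursion for
  \<sigma>_(i-1)j.
\<close>

lemma cinner_zero_left [simp]: "cinner 0 z = 0"
  and cinner_zero_right [simp]: "cinner z 0 = 0"
  by (simp_all add: cinner_def)

lemma cinner_add_left: "cinner (x + y) z = cinner x z + cinner y z"
  by (simp add: cinner_def distrib_right sum.distrib)

lemma cinner_diff_left: "cinner (x - y) z = cinner x z - cinner y z"
  by (simp add: cinner_def left_diff_distrib sum_subtractf)

lemma cinner_scale_left: "cinner (c *s x) z = c * cinner x z"
  by (simp add: cinner_def sum_distrib_left mult.assoc)

lemma cinner_sum_left: "cinner (sum f S) z = (\<Sum>l\<in>S. cinner (f l) z)"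
  by (induction S rule: infinite_finite_induct) (simp_all add: cinner_add_left)

lemma cinner_commute: "cinner x y = cnj (cinner y x)"
  by (simp add: cinner_def mult.commute)

lemma cinner_add_right: "cinner z (x + y) = cinner z x + cinner z y"
  by (simp add: cinner_def distrib_left sum.distrib)

lemma cinner_scale_right: "cinner z (c *s x) = cnj c * cinner z x"
  by (simp add: cinner_def sum_distrib_left mult_ac)

lemma cinner_self_eq_norm: "cinner x x = of_real ((norm x)\<^sup>2)"
  by (simp add: cinner_def norm_vec_def L2_set_def sum_nonneg flip: complex_norm_square)

lemma cinner_self_eq_0 [simp]: "cinner x x = 0 \<longleftrightarrow> x = 0"
  by (simp add: cinner_self_eq_norm)

lemma cinner_adjoint_left: "cinner (A *v x) y = cinner x (adjoint A *v y)"
proof -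
  have "cinner (A *v x) y = (\<Sum>i\<in>UNIV. \<Sum>j\<in>UNIV. A$i$j * x$j * cnj (y$i))"
    by (simp add: cinner_def matrix_vector_mult_def sum_distrib_right)
  also have "\<dots> = (\<Sum>j\<in>UNIV. \<Sum>i\<in>UNIV. A$i$j * x$j * cnj (y$i))"
    by (rule sum.swap)
  also have "\<dots> = cinner x (adjoint A *v y)"
    by (simp add: cinner_def matrix_vector_mult_def adjoint_def sum_distrib_left mult_ac)
  finally show ?thesis .
qed

lemma cinner_adjoint_right: "cinner (adjoint A *v y) x = cinner y (A *v x)"
  by (metis cinner_adjoint_left cinner_commute)

lemma cinner_span_eq_0:
  assumes "z \<in> vec.span S" "\<forall>s\<in>S. cinner x s = 0"
  shows "cinner x z = 0"
  using assms(1)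
proof (induction rule: vec.span_induct)
  case base
  show ?case
    by (auto simp: vec.subspace_def cinner_add_right cinner_scale_right)
qed (use assms(2) in auto)

lemma cproj_of_mem:
  assumes "vec.subspace W" "y \<in> W"
  shows "cproj W y = y"
  unfolding cproj_def
proof (rule the_equality)
  fix y' assume y': "y' \<in> W \<and> (\<forall>z\<in>W. cinner (y - y') z = 0)"
  then have "cinner (y - y') (y - y') = 0"
    using assms vec.subspace_diff by blast
  then show "y' = y" by simp
qed (use assms in simp)

definition orthonormal_seq :: "(nat \<Rightarrow> complex^'n) \<Rightarrow> nat \<Rightarrow> bool" where
  "orthonormal_seq w m \<longleftrightarrow>
     (\<forall>j\<in>{1..m}. \<forall>j'\<in>{1..m}. cinner (w j) (w j') = (if j = j' then 1 else 0))"

definition is_orthonormal_basis :: "(complex^'n) set \<Rightarrow> (nat \<Rightarrow> complex^'n) \<Rightarrow> bool" where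
  "is_orthonormal_basis W w \<longleftrightarrow>
     (\<forall>j\<in>{1..vec.dim W}. w j \<in> W) \<and> orthonormal_seq w (vec.dim W)"

lemma orthonormal_seq_independent:
  assumes "orthonormal_seq w m"
  shows "vec.independent (w ` {1..m})"
proof (rule vec.independent_if_scalars_zero)
  fix f x assume sum0: "(\<Sum>y\<in>w ` {1..m}. f y *s y) = 0" and x: "x \<in> w ` {1..m}"
  have "f x = (\<Sum>y\<in>w ` {1..m}. if y = x then f y else 0)"
    using x by simp
  also have "\<dots> = (\<Sum>y\<in>w ` {1..m}. f y * cinner y x)"
    by (rule sum.cong) (use assms x in \<open>auto simp: orthonormal_seq_def split: if_splits\<close>)
  also have "\<dots> = cinner (\<Sum>y\<in>w ` {1..m}. f y *s y) x"
    by (simp add: cinner_sum_left cinner_scale_left)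
  finally show "f x = 0"
    using sum0 by simp
qed simp

lemma orthonormal_seq_card:
  assumes "orthonormal_seq w m"
  shows "card (w ` {1..m}) = m"
proof -
  have "inj_on w {1..m}"
    using assms unfolding orthonormal_seq_def inj_on_def by (metis one_neq_zero)
  then show ?thesis by (simp add: card_image)
qed

lemma orthonormal_seq_le_dim:
  assumes "orthonormal_seq w m" "\<forall>j\<in>{1..m}. w j \<in> W"
  shows "m \<le> vec.dim W"
proof -
  have "w ` {1..m} \<subseteq> W"
    using assms(2) by auto
  from vec.independent_card_le_dim[OF this orthonormal_seq_independent[OF assms(1)]]
  show ?thesis
    using orthonormal_seq_card[OF assms(1)] by simp
qed

lemma orthonormal_basis_span:
  assumes "is_orthonormal_basis W w"
  shows "W \<subseteq> vec.span (w ` {1..vec.dim W})"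
proof -
  have "w ` {1..vec.dim W} \<subseteq> W"
    using assms by (auto simp: is_orthonormal_basis_def)
  moreover have "orthonormal_seq w (vec.dim W)"
    using assms by (simp add: is_orthonormal_basis_def)
  ultimately show ?thesis
    using vec.card_eq_dim orthonormal_seq_independent orthonormal_seq_card by blast
qed

lemma orthonormal_basis_orthogonal_eq_0:
  assumes "is_orthonormal_basis W w" "x \<in> W" "\<forall>j\<in>{1..vec.dim W}. cinner x (w j) = 0"
  shows "x = 0"
  using cinner_span_eq_0[of x "w ` {1..vec.dim W}" x] orthonormal_basis_span assms by auto

lemma orthonormal_seq_extend_one:
  assumes W: "vec.subspace W" and w: "orthonormal_seq w m" "\<forall>j\<in>{1..m}. w j \<in> W"
    and m: "m < vec.dim W"
  obtains z where "z \<in> W" "orthonormal_seq (w(Suc m := z)) (Suc m)"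
proof -
  have "\<not> W \<subseteq> vec.span (w ` {1..m})"
  proof
    assume "W \<subseteq> vec.span (w ` {1..m})"
    then have "vec.dim W \<le> card (w ` {1..m})"
      by (intro vec.dim_le_card) auto
    also have "\<dots> \<le> m"
      using card_image_le[of "{1..m}" w] by simp
    finally show False using m by simp
  qed
  then obtain x where x: "x \<in> W" "x \<notin> vec.span (w ` {1..m})"
    by blast
  define p where "p = (\<Sum>j\<in>{1..m}. cinner x (w j) *s w j)"
  define y where "y = x - p"
  define z where "z = of_real (1 / norm y) *s y"
  have "p \<in> vec.span (w ` {1..m})"
    unfolding p_def by (intro vec.span_sum vec.span_scale vec.span_base) auto
  then have "y \<noteq> 0"
    using x(2) by (auto simp: y_def)
  have "y \<in> W"
    unfolding y_def p_def using W w(2) x(1)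
    by (intro vec.subspace_diff vec.subspace_sum vec.subspace_scale) auto
  then have "z \<in> W"
    unfolding z_def using W by (rule vec.subspace_scale[rotated])
  have "cinner y (w l) = 0" if l: "l \<in> {1..m}" for l
  proof -
    have "cinner p (w l) = (\<Sum>j\<in>{1..m}. if j = l then cinner x (w j) else 0)"
      unfolding p_def cinner_sum_left cinner_scale_left
      by (rule sum.cong) (use w(1) l in \<open>auto simp: orthonormal_seq_def\<close>)
    then show ?thesis
      using l by (simp add: y_def cinner_diff_left)
  qed
  then have z_orth: "cinner z (w l) = 0" "cinner (w l) z = 0" if "l \<in> {1..m}" for l
    using that by (simp_all add: z_def cinner_scale_left cinner_scale_right cinner_commute[of "w l"])
  have "cinner z z = 1"
    using \<open>y \<noteq> 0\<close>
    by (simp add: z_def cinner_scale_left cinner_scale_right cinner_self_eq_norm[of y] power2_eq_square)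
  with w(1) z_orth have "orthonormal_seq (w(Suc m := z)) (Suc m)"
    by (auto simp: orthonormal_seq_def)
  with \<open>z \<in> W\<close> show ?thesis ..
qed

lemma orthonormal_seq_extend_to_basis:
  assumes W: "vec.subspace W" and w: "orthonormal_seq w m" "\<forall>j\<in>{1..m}. w j \<in> W"
  obtains w' where "\<forall>j\<in>{1..m}. w' j = w j" "is_orthonormal_basis W w'"
  using w
proof (induction "vec.dim W - m" arbitrary: m w thesis)
  case 0
  then have "m = vec.dim W"
    using orthonormal_seq_le_dim by fastforce
  with 0 show ?case
    by (auto simp: is_orthonormal_basis_def)
next
  case (Suc n)
  have "m < vec.dim W"
    using Suc.hyps(2) by simp
  then obtain z where z: "z \<in> W" "orthonormal_seq (w(Suc m := z)) (Suc m)"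
    by (rule orthonormal_seq_extend_one[OF W Suc.prems(2,3)])
  have "n = vec.dim W - Suc m"
    using Suc.hyps(2) by simp
  moreover have "\<forall>j\<in>{1..Suc m}. (w(Suc m := z)) j \<in> W"
    using Suc.prems(3) z(1) by auto
  ultimately obtain w' where w': "\<forall>j\<in>{1..Suc m}. w' j = (w(Suc m := z)) j"
      "is_orthonormal_basis W w'"
    using Suc.hyps(1) z(2) by blast
  show ?case
    by (rule Suc.prems(1)[of w']) (use w' in auto)
qed

lemma singular_vectors_step:
  fixes T :: "complex^'n^'n" and s :: "nat \<Rightarrow> real"
  assumes Y: "vec.subspace Y"
    and TX: "\<forall>x\<in>X. T *v x \<in> Y" and TY: "\<forall>y\<in>Y. adjoint T *v y \<in> X"
    and u: "is_orthonormal_basis X u"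
    and s_pos: "\<forall>j\<in>{1..vec.dim X}. s j > 0"
    and eigen: "\<forall>j\<in>{1..vec.dim X}. adjoint T *v (T *v u j) = of_real ((s j)\<^sup>2) *s u j"
  obtains w where "is_orthonormal_basis Y w" "vec.dim X \<le> vec.dim Y"
    "\<forall>j\<in>{1..vec.dim X}. T *v u j = of_real (s j) *s w j"
    "\<forall>j\<in>{1..vec.dim Y}. adjoint T *v w j = (if j \<le> vec.dim X then of_real (s j) *s u j else 0)"
proof -
  let ?m = "vec.dim X"
  define v where "v j = of_real (1 / s j) *s (T *v u j)" for j
  have v_Y: "\<forall>j\<in>{1..?m}. v j \<in> Y"
    using u TX Y by (auto simp: v_def is_orthonormal_basis_def intro: vec.subspace_scale)
  have "cinner (v j) (v j') = (if j = j' then 1 else 0)" if "j \<in> {1..?m}" "j' \<in> {1..?m}" for j j'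
  proof -
    have "cinner (v j) (v j') = of_real (1 / s j) * of_real (1 / s j') * cinner (u j) (adjoint T *v (T *v u j'))"
      by (simp add: v_def cinner_scale_left cinner_scale_right cinner_adjoint_left)
    also have "\<dots> = of_real (1 / s j) * of_real (1 / s j') * of_real ((s j')\<^sup>2) * cinner (u j) (u j')"
      using eigen that by (simp add: cinner_scale_right)
    moreover have "s j' > 0"
      using s_pos that by simp
    ultimately show ?thesis
      using u that by (auto simp: is_orthonormal_basis_def orthonormal_seq_def power2_eq_square)
  qed
  then have v_on: "orthonormal_seq v ?m"
    by (simp add: orthonormal_seq_def)
  obtain w where w_v: "\<forall>j\<in>{1..?m}. w j = v j" and w: "is_orthonormal_basis Y w"
    using orthonormal_seq_extend_to_basis[OF Y v_on v_Y] by blast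
  have dim_le: "?m \<le> vec.dim Y"
    by (rule orthonormal_seq_le_dim[OF v_on v_Y])
  have T_u: "\<forall>j\<in>{1..?m}. T *v u j = of_real (s j) *s w j"
    using w_v s_pos by (auto simp: v_def)
  have "adjoint T *v w j = of_real (s j) *s u j" if j: "j \<in> {1..?m}" for j
    using w_v eigen s_pos j by (simp add: v_def vector_scalar_commute power2_eq_square)
  moreover have "adjoint T *v w j = 0" if j: "j \<in> {1..vec.dim Y}" "?m < j" for j
  proof (rule orthonormal_basis_orthogonal_eq_0[OF u])
    show "adjoint T *v w j \<in> X"
      using TY w j by (simp add: is_orthonormal_basis_def)
    show "\<forall>l\<in>{1..?m}. cinner (adjoint T *v w j) (u l) = 0"
      using T_u w j dim_le
      by (auto simp: cinner_adjoint_right cinner_scale_right is_orthonormal_basis_def orthonormal_seq_def)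
  qed
  ultimately show ?thesis
    using that w dim_le T_u by force
qed

declare sigma.simps [simp del]

lemma sigma_ge_1: "sigma k d i j \<ge> 1"
  by (subst sigma.simps) auto

lemma sigma_squared:
  "i < k \<Longrightarrow> j \<le> d (Suc i) \<Longrightarrow> (sigma k d i j)\<^sup>2 = 1 + (sigma k d (Suc i) j)\<^sup>2"
  by (subst sigma.simps) (simp add: add_nonneg_nonneg)

lemma sigma_eq_1:
  assumes "\<not> (i < k \<and> j \<le> d (Suc i))"
  shows "sigma k d i j = 1"
  by (subst sigma.simps) (simp only: if_not_P[OF assms])

locale graded_splitting =
  fixes B :: "complex^'n^'n" and k :: nat and V :: "nat \<Rightarrow> (complex^'n) set"
  assumes k_ge_1: "k \<ge> 1"
    and subspace_V: "\<forall>i\<le>k. vec.subspace (V i)"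
    and orthogonal_V: "\<forall>i\<le>k. \<forall>i'\<le>k. i \<noteq> i' \<longrightarrow> (\<forall>x\<in>V i. \<forall>y\<in>V i'. cinner x y = 0)"
    and sum_V: "\<forall>x. \<exists>v. (\<forall>i\<le>k. v i \<in> V i) \<and> x = (\<Sum>i\<le>k. v i)"
    and V_0: "V 0 = {x. B *v x = 0}"
    and B_V: "\<forall>i. 1 \<le> i \<and> i \<le> k \<longrightarrow> (\<forall>x\<in>V i. B *v x \<in> V (i - 1))"
    and E_commutator: "\<forall>i. 1 \<le> i \<and> i < k \<longrightarrow>
           (\<forall>x\<in>V i. Eadj B V i (Eop B V i x) - Eop B V (i + 1) (Eadj B V (i + 1) x) = x)"
    and E_top: "\<forall>x\<in>V k. Eadj B V k (Eop B V k x) = x"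
begin

abbreviation dims :: "nat \<Rightarrow> nat" where
  "dims i \<equiv> vec.dim (V i)"

abbreviation \<sigma> :: "nat \<Rightarrow> nat \<Rightarrow> real" where
  "\<sigma> i j \<equiv> sigma k dims i j"

lemma B_mem_V: "1 \<le> i \<Longrightarrow> i \<le> k \<Longrightarrow> x \<in> V i \<Longrightarrow> B *v x \<in> V (i - 1)"
  using B_V by blast

lemma orthogonal_to_other_components:
  assumes "\<forall>l\<le>k. l \<noteq> i \<longrightarrow> (\<forall>z\<in>V l. cinner x z = 0)"
  shows "i \<le> k \<Longrightarrow> x \<in> V i" and "k < i \<Longrightarrow> x = 0"
proof -
  obtain v where v: "\<forall>l\<le>k. v l \<in> V l" and x: "x = (\<Sum>l\<le>k. v l)"
    using sum_V by blast
  have "v l = 0" if l: "l \<le> k" "l \<noteq> i" for l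
  proof -
    have "cinner (v l) (v l) = (\<Sum>l'\<le>k. if l' = l then cinner (v l') (v l) else 0)"
      using l by simp
    also have "\<dots> = (\<Sum>l'\<le>k. cinner (v l') (v l))"
      by (rule sum.cong) (use orthogonal_V v l in auto)
    also have "\<dots> = cinner x (v l)"
      by (simp add: x cinner_sum_left)
    also have "\<dots> = 0"
      using assms v l by simp
    finally show ?thesis by simp
  qed
  then have "x = (\<Sum>l\<le>k. if l = i then v i else 0)"
    unfolding x by (intro sum.cong) auto
  then have "x = (if i \<le> k then v i else 0)"
    by simp
  then show "i \<le> k \<Longrightarrow> x \<in> V i" and "k < i \<Longrightarrow> x = 0"
    using v by auto
qed

lemma adjoint_orthogonal_to_other_components:
  assumes i: "1 \<le> i" "i \<le> Suc k" and y: "y \<in> V (i - 1)"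
  shows "\<forall>l\<le>k. l \<noteq> i \<longrightarrow> (\<forall>z\<in>V l. cinner (adjoint B *v y) z = 0)"
proof (intro allI impI ballI)
  fix l z assume l: "l \<le> k" "l \<noteq> i" and z: "z \<in> V l"
  have "cinner y (B *v z) = 0"
  proof (cases "l = 0")
    case True
    then show ?thesis using z V_0 by simp
  next
    case False
    then have "B *v z \<in> V (l - 1)"
      using B_mem_V l z by simp
    moreover have "i - 1 \<le> k" "l - 1 \<le> k" "i - 1 \<noteq> l - 1"
      using i l False by auto
    ultimately show ?thesis
      using orthogonal_V y by blast
  qed
  then show "cinner (adjoint B *v y) z = 0"
    by (simp add: cinner_adjoint_right)
qed

lemma adjoint_mem_V:
  "1 \<le> i \<Longrightarrow> i \<le> k \<Longrightarrow> y \<in> V (i - 1) \<Longrightarrow> adjoint B *v y \<in> V i"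
  using orthogonal_to_other_components(1) adjoint_orthogonal_to_other_components by simp

lemma adjoint_V_top_eq_0: "y \<in> V k \<Longrightarrow> adjoint B *v y = 0"
  using orthogonal_to_other_components(2)[OF adjoint_orthogonal_to_other_components, of "Suc k"]
  by simp

lemma Eop_eq: "1 \<le> i \<Longrightarrow> i \<le> k \<Longrightarrow> x \<in> V i \<Longrightarrow> Eop B V i x = B *v x"
  using B_V subspace_V by (simp add: Eop_def cproj_of_mem)

lemma Eadj_eq: "1 \<le> i \<Longrightarrow> i \<le> k \<Longrightarrow> y \<in> V (i - 1) \<Longrightarrow> Eadj B V i y = adjoint B *v y"
  using adjoint_mem_V subspace_V by (simp add: Eadj_def cproj_of_mem)

lemma adjoint_B_on_V:
  assumes i: "1 \<le> i" "i \<le> k" and x: "x \<in> V i"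
  shows "adjoint B *v (B *v x) = x + B *v (adjoint B *v x)"
proof (cases "i < k")
  case True
  have "adjoint B *v x \<in> V (i + 1)"
    using adjoint_mem_V[of "i + 1"] True x by simp
  then have "B *v (adjoint B *v x) \<in> V i"
    using B_mem_V[of "i + 1"] True by simp
  moreover have "B *v x \<in> V (i - 1)"
    using B_mem_V i x by simp
  moreover have "Eadj B V i (Eop B V i x) - Eop B V (i + 1) (Eadj B V (i + 1) x) = x"
    using E_commutator i x True by blast
  ultimately show ?thesis
    using i x True \<open>adjoint B *v x \<in> V (i + 1)\<close>
    by (simp add: Eop_eq Eadj_eq algebra_simps)
next
  case False
  then have "i = k" using i by simp
  moreover have "B *v x \<in> V (k - 1)"
    using B_mem_V k_ge_1 x \<open>i = k\<close> by simp
  moreover have "Eadj B V k (Eop B V k x) = x"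
    using E_top x \<open>i = k\<close> by blast
  ultimately show ?thesis
    using x k_ge_1 adjoint_V_top_eq_0 Eop_eq[of k x] Eadj_eq[of k "B *v x"] by simp
qed

text \<open>
  The invariant of the downward construction. Its last clause, on the lowest level only, is
  what makes the u_mj eigenvectors of B^*B.
\<close>

definition adapted_basis_from :: "nat \<Rightarrow> (nat \<Rightarrow> nat \<Rightarrow> complex^'n) \<Rightarrow> bool" where
  "adapted_basis_from m u \<longleftrightarrow>
     (\<forall>i\<in>{m..k}. is_orthonormal_basis (V i) (u i)) \<and>
     (\<forall>i\<in>{m<..k}. dims i \<le> dims (i - 1) \<and>
        (\<forall>j\<in>{1..dims i}. B *v u i j = of_real (\<sigma> i j) *s u (i - 1) j)) \<and>
     (\<forall>j\<in>{1..dims m}. adjoint B *v u m j =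
        (if m < k \<and> j \<le> dims (Suc m) then of_real (\<sigma> (Suc m) j) *s u (Suc m) j else 0))"

lemma adapted_basis_eigenvector:
  assumes u: "adapted_basis_from m u" and m: "1 \<le> m" "m \<le> k" and j: "j \<in> {1..dims m}"
  shows "adjoint B *v (B *v u m j) = of_real ((\<sigma> m j)\<^sup>2) *s u m j"
proof -
  have "u m j \<in> V m"
    using u m j by (simp add: adapted_basis_from_def is_orthonormal_basis_def)
  then have "adjoint B *v (B *v u m j) = u m j + B *v (adjoint B *v u m j)"
    using adjoint_B_on_V m by blast
  also have "\<dots> = of_real ((\<sigma> m j)\<^sup>2) *s u m j"
  proof (cases "m < k \<and> j \<le> dims (Suc m)")
    case True
    then have "adjoint B *v u m j = of_real (\<sigma> (Suc m) j) *s u (Suc m) j"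
         and "B *v u (Suc m) j = of_real (\<sigma> (Suc m) j) *s u m j"
      using u j by (auto simp: adapted_basis_from_def)
    then have "u m j + B *v (adjoint B *v u m j) =
        (1 + of_real (\<sigma> (Suc m) j) * of_real (\<sigma> (Suc m) j)) *s u m j"
      by (simp add: vector_scalar_commute vec.scale_left_distrib)
    also have "\<dots> = of_real (1 + (\<sigma> (Suc m) j)\<^sup>2) *s u m j"
      by (simp add: power2_eq_square)
    also have "1 + (\<sigma> (Suc m) j)\<^sup>2 = (\<sigma> m j)\<^sup>2"
      using True by (simp add: sigma_squared)
    finally show ?thesis .
  next
    case False
    have "adjoint B *v u m j =
        (if m < k \<and> j \<le> dims (Suc m) then of_real (\<sigma> (Suc m) j) *s u (Suc m) j else 0)"
      using u j by (simp add: adapted_basis_from_def)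
    then have "adjoint B *v u m j = 0"
      by (simp only: if_not_P[OF False])
    then show ?thesis
      using sigma_eq_1[where d = dims, OF False] by simp
  qed
  finally show ?thesis .
qed

lemma adapted_basis_top: "\<exists>u. adapted_basis_from k u"
proof -
  obtain w where "is_orthonormal_basis (V k) w"
    using orthonormal_seq_extend_to_basis[of "V k" _ 0] subspace_V
    by (auto simp: orthonormal_seq_def)
  then have "adapted_basis_from k (\<lambda>_. w)"
    using adjoint_V_top_eq_0 by (simp add: adapted_basis_from_def is_orthonormal_basis_def)
  then show ?thesis by blast
qed

lemma adapted_basis_update:
  assumes u: "adapted_basis_from i u" and i: "1 \<le> i" "i \<le> k"
    and w: "is_orthonormal_basis (V (i - 1)) w" "dims i \<le> dims (i - 1)"
      "\<forall>j\<in>{1..dims i}. B *v u i j = of_real (\<sigma> i j) *s w j"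
      "\<forall>j\<in>{1..dims (i - 1)}. adjoint B *v w j = (if j \<le> dims i then of_real (\<sigma> i j) *s u i j else 0)"
  shows "adapted_basis_from (i - 1) (u(i - 1 := w))"
proof -
  let ?u = "u(i - 1 := w)"
  have "\<forall>i'\<in>{i - 1..k}. is_orthonormal_basis (V i') (?u i')"
    using u w(1) by (auto simp: adapted_basis_from_def)
  moreover have "\<forall>i'\<in>{i - 1<..k}. dims i' \<le> dims (i' - 1) \<and>
      (\<forall>j\<in>{1..dims i'}. B *v ?u i' j = of_real (\<sigma> i' j) *s ?u (i' - 1) j)"
  proof
    fix i' assume "i' \<in> {i - 1<..k}"
    then consider "i' = i" | "i' \<in> {i<..k}"
      using i by fastforce
    then show "dims i' \<le> dims (i' - 1) \<and>
        (\<forall>j\<in>{1..dims i'}. B *v ?u i' j = of_real (\<sigma> i' j) *s ?u (i' - 1) j)"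
    proof cases
      case 1
      then show ?thesis using w(2,3) i by simp
    next
      case 2
      then have "?u i' = u i'" "?u (i' - 1) = u (i' - 1)"
        using i by auto
      with 2 u show ?thesis
        by (simp add: adapted_basis_from_def)
    qed
  qed
  moreover have "\<forall>j\<in>{1..dims (i - 1)}. adjoint B *v ?u (i - 1) j =
      (if i - 1 < k \<and> j \<le> dims (Suc (i - 1)) then of_real (\<sigma> (Suc (i - 1)) j) *s ?u (Suc (i - 1)) j else 0)"
    using w(4) i by simp
  ultimately show ?thesis
    unfolding adapted_basis_from_def by (intro conjI)
qed

lemma adapted_basis_step:
  assumes u: "adapted_basis_from i u" and i: "1 \<le> i" "i \<le> k"
  shows "\<exists>u'. adapted_basis_from (i - 1) u'"
proof -
  have u_i: "is_orthonormal_basis (V i) (u i)"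
    using u i by (simp add: adapted_basis_from_def)
  have "vec.subspace (V (i - 1))"
    using subspace_V i by simp
  moreover have "\<forall>x\<in>V i. B *v x \<in> V (i - 1)"
    using B_mem_V i by blast
  moreover have "\<forall>y\<in>V (i - 1). adjoint B *v y \<in> V i"
    using adjoint_mem_V i by blast
  moreover have "\<forall>j\<in>{1..dims i}. \<sigma> i j > 0"
    using sigma_ge_1 by (simp add: less_le_trans[OF zero_less_one])
  moreover have "\<forall>j\<in>{1..dims i}. adjoint B *v (B *v u i j) = of_real ((\<sigma> i j)\<^sup>2) *s u i j"
    using adapted_basis_eigenvector[OF u i] by blast
  ultimately obtain w where w: "is_orthonormal_basis (V (i - 1)) w" "dims i \<le> dims (i - 1)"
    "\<forall>j\<in>{1..dims i}. B *v u i j = of_real (\<sigma> i j) *s w j"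
    "\<forall>j\<in>{1..dims (i - 1)}. adjoint B *v w j = (if j \<le> dims i then of_real (\<sigma> i j) *s u i j else 0)"
    using singular_vectors_step[OF _ _ _ u_i] by blast
  then show ?thesis
    using adapted_basis_update[OF u i] by blast
qed

lemma adapted_basis_exists: "\<exists>u. adapted_basis_from 0 u"
proof -
  have "\<exists>u. adapted_basis_from (k - n) u" if "n \<le> k" for n
    using that
  proof (induction n)
    case 0
    then show ?case using adapted_basis_top by simp
  next
    case (Suc n)
    then obtain u where u: "adapted_basis_from (k - n) u"
      by auto
    have "1 \<le> k - n" "k - n \<le> k"
      using Suc.prems by auto
    then obtain u' where "adapted_basis_from (k - n - 1) u'"
      using adapted_basis_step[OF u] by blast
    moreover have "k - n - 1 = k - Suc n"
      by simp
    ultimately show ?case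
      by auto
  qed
  from this[of k] show ?thesis
    by simp
qed

end

theorem proposition5p6:
  fixes B :: "complex^'n^'n" and k :: nat and V :: "nat \<Rightarrow> (complex^'n) set"
  assumes "k \<ge> 1"
    and "B ** (B ** adjoint B - adjoint B ** B) = - B"
    and "mpow B k \<noteq> 0" and "mpow B (k + 1) = 0"
    and "\<forall>i\<le>k. vec.subspace (V i)"
    and "\<forall>i\<le>k. \<forall>i'\<le>k. i \<noteq> i' \<longrightarrow> (\<forall>x\<in>V i. \<forall>y\<in>V i'. cinner x y = 0)"
    and "\<forall>x. \<exists>v. (\<forall>i\<le>k. v i \<in> V i) \<and> x = (\<Sum>i\<le>k. v i)"
    and "V 0 = {x. B *v x = 0}"
    and "\<forall>i. 1 \<le> i \<and> i \<le> k \<longrightarrow> (\<forall>x\<in>V i. B *v x \<in> V (i - 1))"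
    and "\<forall>i. 1 \<le> i \<and> i < k \<longrightarrow>
           (\<forall>x\<in>V i. Eadj B V i (Eop B V i x) - Eop B V (i + 1) (Eadj B V (i + 1) x) = x)"
    and "\<forall>x\<in>V k. Eadj B V k (Eop B V k x) = x"
  shows "\<exists>u :: nat \<Rightarrow> nat \<Rightarrow> complex^'n.
     (\<forall>i\<le>k.
        (\<forall>j\<in>{1..vec.dim (V i)}. u i j \<in> V i) \<and>
        (\<forall>j\<in>{1..vec.dim (V i)}. \<forall>j'\<in>{1..vec.dim (V i)}.
            cinner (u i j) (u i j') = (if j = j' then 1 else 0)) \<and>
        V i \<subseteq> vec.span (u i ` {1..vec.dim (V i)})) \<and>
     (\<forall>i\<in>{1..k}. vec.dim (V i) \<le> vec.dim (V (i - 1))) \<and>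
     (\<forall>j\<in>{1..vec.dim (V 0)}. B *v u 0 j = 0) \<and>
     (\<forall>i\<in>{1..k}. \<forall>j\<in>{1..vec.dim (V i)}.
        B *v u i j = complex_of_real (sigma k (\<lambda>m. vec.dim (V m)) i j) *s u (i - 1) j)"
proof -
  interpret graded_splitting B k V
    by (rule graded_splitting.intro[OF assms(1,5-11)])
  obtain u where u: "adapted_basis_from 0 u"
    using adapted_basis_exists by blast
  have onb: "is_orthonormal_basis (V i) (u i)" if "i \<le> k" for i
    using u that by (simp add: adapted_basis_from_def)
  moreover have "V i \<subseteq> vec.span (u i ` {1..dims i})" if "i \<le> k" for i
    using orthonormal_basis_span onb that by blast
  ultimately have basis: "\<forall>i\<le>k. (\<forall>j\<in>{1..dims i}. u i j \<in> V i) \<and>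
      (\<forall>j\<in>{1..dims i}. \<forall>j'\<in>{1..dims i}. cinner (u i j) (u i j') = (if j = j' then 1 else 0)) \<and>
      V i \<subseteq> vec.span (u i ` {1..dims i})"
    by (auto simp: is_orthonormal_basis_def orthonormal_seq_def)
  have kernel: "\<forall>j\<in>{1..dims 0}. B *v u 0 j = 0"
    using onb[of 0] V_0 by (auto simp: is_orthonormal_basis_def)
  have dims: "\<forall>i\<in>{1..k}. dims i \<le> dims (i - 1)"
    and shift: "\<forall>i\<in>{1..k}. \<forall>j\<in>{1..dims i}. B *v u i j = of_real (\<sigma> i j) *s u (i - 1) j"
    using u by (auto simp: adapted_basis_from_def)
  show ?thesis
    by (intro exI[of _ u] conjI basis dims kernel shift)
qed

end
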